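(* Let $n\ge1$, $b\in\mathbb{Z}$, $P_b:\{0,1,\dots,2^n\}\to\mathbb{Z}$, $d(x)=P_b(x)-bx$, let $\epsilon_0$ be the fraction of $x\in D_n$ with $d(x)\ne0$, let $\beta>0$ and $0<\alpha<1$. Assume that the fraction of $x\in D_n$ with $d(x)>0$ and the fraction with $d(x)<0$ are each greater than $\epsilon_0/2-\beta$. If $x\in D_n$ is good, then RandSplit$(x,b,P_b)$ outputs FAIL with probability at least $\epsilon_0/2-\beta-\frac1\alpha(\epsilon_0/2)^2$.
   Context: $D_n=\{0,1,\dots,2^n-1\}$; Rand$(0,2^n)$ is a uniformly random element of $D_n$. For $x,x_1\in D_n$, $\delta_x(x_1)=1$ if $d(x_1)>0$ and $d((x-x_1)\bmod 2^n)<0$, and $\delta_x(x_1)=0$ otherwise; the number of opposite-sign matches of $x$ is $\sum_{x_1\in D_n}\delta_x(x_1)$, and $x$ is good if this number is at most $\frac1\alpha(\epsilon_0/2)^2 2^n$. RandSplit$(x,b,P)$: choose $x_1\leftarrow$ Rand$(0,2^n)$; set $\delta=0$ if $x_1<x$ and $\delta=1$ otherwise; set $x_2=\delta\cdot 2^n+x-x_1$; if $P(x_1)+P(x_2)\ne b\cdot\delta\cdot 2^n+P(x)$ return FAIL, else return PASS. *)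

theory Defs
  imports "HOL-Probability.Probability"
begin

definition Dn :: "nat \<Rightarrow> int set" where
  "Dn n = {0..<2^n}"

text \<open>d(x) = P_b(x) - b x; P is only ever evaluated on {0..2^n}.\<close>
definition dev :: "(int \<Rightarrow> int) \<Rightarrow> int \<Rightarrow> int \<Rightarrow> int" where
  "dev P b x = P x - b * x"

definition frac :: "nat \<Rightarrow> (int \<Rightarrow> bool) \<Rightarrow> real" where
  "frac n Q = real (card {x \<in> Dn n. Q x}) / 2 ^ n"

definition eps0 :: "nat \<Rightarrow> (int \<Rightarrow> int) \<Rightarrow> int \<Rightarrow> real" where
  "eps0 n P b = frac n (\<lambda>x. dev P b x \<noteq> 0)"

definition delta_x :: "nat \<Rightarrow> (int \<Rightarrow> int) \<Rightarrow> int \<Rightarrow> int \<Rightarrow> int \<Rightarrow> nat" where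
  "delta_x n P b x x1 =
     (if dev P b x1 > 0 \<and> dev P b ((x - x1) mod 2^n) < 0 then 1 else 0)"

definition opp_matches :: "nat \<Rightarrow> (int \<Rightarrow> int) \<Rightarrow> int \<Rightarrow> int \<Rightarrow> nat" where
  "opp_matches n P b x = (\<Sum>x1\<in>Dn n. delta_x n P b x x1)"

definition good :: "nat \<Rightarrow> (int \<Rightarrow> int) \<Rightarrow> int \<Rightarrow> real \<Rightarrow> int \<Rightarrow> bool" where
  "good n P b \<alpha> x \<longleftrightarrow>
     real (opp_matches n P b x) \<le> (1 / \<alpha>) * (eps0 n P b / 2)^2 * 2^n"

definition randsplit_fails :: "nat \<Rightarrow> int \<Rightarrow> (int \<Rightarrow> int) \<Rightarrow> int \<Rightarrow> int \<Rightarrow> bool" where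
  "randsplit_fails n b P x x1 =
     (let \<delta> = (if x1 < x then 0 else 1 :: int);
          x2 = \<delta> * 2^n + x - x1
      in P x1 + P x2 \<noteq> b * \<delta> * 2^n + P x)"

definition fail_prob :: "nat \<Rightarrow> int \<Rightarrow> (int \<Rightarrow> int) \<Rightarrow> int \<Rightarrow> real" where
  "fail_prob n b P x =
     measure_pmf.prob (pmf_of_set (Dn n)) {x1. randsplit_fails n b P x x1}"

end

theory Submission
  imports Defs
begin

text \<open>For x1 \<noteq> x, RandSplit fails exactly when d(x1) + d(x2) \<noteq> d(x), where
  x2 = (x - x1) mod 2^n. If d(x) \<le> 0, every x1 with d(x1) > 0 fails unless
  d(x2) < 0, i.e. unless x1 is an opposite-sign match; if d(x) > 0, every x1 with
  d(x1) < 0 fails unless d(x2) > 0, and x1 \<mapsto> x2 maps these exceptions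
  bijectively onto the opposite-sign matches. Either way at least a fraction
  \<epsilon>0/2 - \<beta> of D_n fails, minus the opposite-sign matches, which goodness bounds.\<close>

lemma finite_Dn [simp]: "finite (Dn n)"
  by (simp add: Dn_def)

lemma card_Dn [simp]: "card (Dn n) = 2 ^ n"
  by (simp add: Dn_def nat_power_eq)

lemma mod_in_Dn: "y mod 2 ^ n \<in> Dn n"
  by (simp add: Dn_def)

lemma mod_eq_self_Dn: "y \<in> Dn n \<Longrightarrow> y mod 2 ^ n = y"
  by (simp add: Dn_def)

lemma reflect_reflect_Dn:
  "y \<in> Dn n \<Longrightarrow> (x - (x - y) mod 2 ^ n) mod 2 ^ n = y"
  by (simp add: mod_diff_right_eq mod_eq_self_Dn)

lemma randsplit_fails_iff_dev:
  assumes "x \<in> Dn n" "x1 \<in> Dn n" "x1 \<noteq> x"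
  shows "randsplit_fails n b P x x1 \<longleftrightarrow>
         dev P b x1 + dev P b ((x - x1) mod 2 ^ n) \<noteq> dev P b x"
proof (cases "x1 < x")
  case True
  then have reflect: "(x - x1) mod 2 ^ n = x - x1"
    using assms by (auto simp: Dn_def)
  show ?thesis
    using True unfolding randsplit_fails_def dev_def reflect
    by (auto simp: algebra_simps)
next
  case False
  then have "x < x1" using assms(3) by simp
  have "(x - x1) mod 2 ^ n = (2 ^ n + x - x1) mod 2 ^ n"
    by (metis add.commute add_diff_eq mod_add_self2)
  also have "\<dots> = 2 ^ n + x - x1"
    using assms \<open>x < x1\<close> by (auto simp: Dn_def)
  finally have reflect: "(x - x1) mod 2 ^ n = 2 ^ n + x - x1" .
  show ?thesis
    using False unfolding randsplit_fails_def dev_def reflect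
    by (auto simp: algebra_simps)
qed

lemma opp_matches_eq_card:
  "opp_matches n P b x =
     card {x1 \<in> Dn n. dev P b x1 > 0 \<and> dev P b ((x - x1) mod 2 ^ n) < 0}"
  by (simp add: opp_matches_def delta_x_def sum.If_cases Int_def)

lemma card_opp_matches_swap:
  "card {x1 \<in> Dn n. dev P b x1 < 0 \<and> dev P b ((x - x1) mod 2 ^ n) > 0} =
     opp_matches n P b x"
proof -
  have "bij_betw (\<lambda>x1. (x - x1) mod 2 ^ n)
          {x1 \<in> Dn n. dev P b x1 < 0 \<and> dev P b ((x - x1) mod 2 ^ n) > 0}
          {x1 \<in> Dn n. dev P b x1 > 0 \<and> dev P b ((x - x1) mod 2 ^ n) < 0}"
    by (rule bij_betw_byWitness[where f' = "\<lambda>x1. (x - x1) mod 2 ^ n"])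
       (auto simp: reflect_reflect_Dn mod_in_Dn)
  then show ?thesis
    by (simp add: bij_betw_same_card opp_matches_eq_card)
qed

lemma card_sign_class_le_fails_plus_matches:
  fixes P :: "int \<Rightarrow> int" and b :: int
  assumes "x \<in> Dn n"
  defines "F \<equiv> {x1 \<in> Dn n. randsplit_fails n b P x x1}"
  shows "card {y \<in> Dn n. dev P b y > 0} \<le> card F + opp_matches n P b x \<or>
         card {y \<in> Dn n. dev P b y < 0} \<le> card F + opp_matches n P b x"
proof (cases "dev P b x \<le> 0")
  case True
  let ?M = "{x1 \<in> Dn n. dev P b x1 > 0 \<and> dev P b ((x - x1) mod 2 ^ n) < 0}"
  have "{y \<in> Dn n. dev P b y > 0} \<subseteq> F \<union> ?M"
    using True randsplit_fails_iff_dev[OF assms(1)] by (fastforce simp: F_def)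
  then have "card {y \<in> Dn n. dev P b y > 0} \<le> card F + card ?M"
    by (metis (no_types, lifting) card_Un_le card_mono finite_Dn finite_Un
        finite_subset mem_Collect_eq subsetI F_def order_trans)
  then show ?thesis by (simp add: opp_matches_eq_card)
next
  case False
  let ?K = "{x1 \<in> Dn n. dev P b x1 < 0 \<and> dev P b ((x - x1) mod 2 ^ n) > 0}"
  have "{y \<in> Dn n. dev P b y < 0} \<subseteq> F \<union> ?K"
    using False randsplit_fails_iff_dev[OF assms(1)] by (fastforce simp: F_def)
  then have "card {y \<in> Dn n. dev P b y < 0} \<le> card F + card ?K"
    by (metis (no_types, lifting) card_Un_le card_mono finite_Dn finite_Un
        finite_subset mem_Collect_eq subsetI F_def order_trans)
  then show ?thesis by (simp add: card_opp_matches_swap)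
qed

lemma fail_prob_eq_card:
  "fail_prob n b P x = real (card {x1 \<in> Dn n. randsplit_fails n b P x x1}) / 2 ^ n"
proof -
  have "Dn n \<noteq> {}"
    using card_Dn[of n] by (metis card.empty power_not_zero zero_neq_numeral)
  then show ?thesis
    by (simp add: fail_prob_def measure_pmf_of_set Int_def conj_commute)
qed

theorem mainTheorem8:
  fixes n :: nat and b :: int and P :: "int \<Rightarrow> int"
    and \<alpha> \<beta> :: real and x :: int
  assumes "n \<ge> 1"
    and "\<beta> > 0" and "0 < \<alpha>" and "\<alpha> < 1"
    and "frac n (\<lambda>y. dev P b y > 0) > eps0 n P b / 2 - \<beta>"
    and "frac n (\<lambda>y. dev P b y < 0) > eps0 n P b / 2 - \<beta>"
    and "x \<in> Dn n"
    and "good n P b \<alpha> x"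
  shows "fail_prob n b P x \<ge> eps0 n P b / 2 - \<beta> - (1 / \<alpha>) * (eps0 n P b / 2)^2"
proof -
  let ?F = "card {x1 \<in> Dn n. randsplit_fails n b P x x1}"
  let ?m = "opp_matches n P b x"
  have "frac n (\<lambda>y. dev P b y > 0) \<le> (real ?F + real ?m) / 2 ^ n \<or>
        frac n (\<lambda>y. dev P b y < 0) \<le> (real ?F + real ?m) / 2 ^ n"
    using card_sign_class_le_fails_plus_matches[OF assms(7), of P b]
    by (auto simp: frac_def divide_right_mono simp flip: of_nat_add)
  moreover have "real ?m / 2 ^ n \<le> (1 / \<alpha>) * (eps0 n P b / 2)^2"
    using assms(8) by (simp add: good_def field_simps)
  ultimately show ?thesis
    using assms(5,6) unfolding fail_prob_eq_card add_divide_distrib by linarith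
qed

end
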